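(* Let $G$ be a graph on $[n]$ and let $e$ and $f$ be two crossing edges of $G$ that are crossing closed. Then exactly one of the following holds. (1) There is an edge of $G$ joining a vertex of $e$ to a vertex of $f$. In this case $J(e,f)=G[e\cup f]$, the induced subgraph on the four endpoints of $e$ and $f$ (so $J(e,f)$ is a subgraph of $K_4$). (2) There is no edge of $G$ joining a vertex of $e$ to a vertex of $f$. In this case, writing $e=vv'$ and $f=ww'$ suitably, there are $k\ge 0$ and distinct vertices $x_0,\dots,x_k$ not on $e$ or $f$ such that $J(e,f)$ has vertex set $\{v,v',x_0,\dots,x_k,w',w\}$ and its edges are exactly $vv'$, $ww'$, the path edges $x_0x_1,x_1x_2,\dots,x_{k-1}x_k$, at least one and at most two of the edges $vx_0,v'x_0$, and at least one and at most two of the edges $wx_k,w'x_k$ (with no other edges). Moreover, every vertex of $J(e,f)$ not on $e$ or $f$ (i.e. each $x_i$) is a cut vertex of $G$ that separates $e$ and $f$.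
   Context: All graphs are finite simple graphs with vertex set $[n]=\{1,\dots,n\}$; edges are written $ij$ with $i<j$. Two edges $a_1a_2$ and $b_1b_2$ cross if $a_1<b_1<a_2<b_2$ or $b_1<a_1<b_2<a_2$. For a set $S$ of vertices, $G[S]$ is the induced subgraph of $G$ on $S$; for a set of edges $E$, $G[E]$ is the induced subgraph on the set of endpoints of the edges in $E$. Two crossing edges $e,f$ of $G$ are crossing closed if among all induced connected subgraphs of $G$ containing both $e$ and $f$ there is a unique one that is minimal with respect to containment; this subgraph is denoted $J(e,f)$. A vertex $x$ separates $e$ and $f$ if $e$ and $f$ lie in different connected components of $G\setminus x$. *)

theory Defs
  imports Main
begin

text \<open>A graph on [n] is given by its edge set E of pairs (i,j) with 1 <= i < j <= n;
  the vertex set is always {1..n}.\<close>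

definition graph_on :: "nat \<Rightarrow> (nat \<times> nat) set \<Rightarrow> bool" where
  "graph_on n E \<longleftrightarrow> E \<subseteq> {(i,j). 1 \<le> i \<and> i < j \<and> j \<le> n}"

definition ends :: "nat \<times> nat \<Rightarrow> nat set" where
  "ends e = {fst e, snd e}"

definition adj :: "(nat \<times> nat) set \<Rightarrow> nat \<Rightarrow> nat \<Rightarrow> bool" where
  "adj E u v \<longleftrightarrow> (u, v) \<in> E \<or> (v, u) \<in> E"

definition crossing :: "nat \<times> nat \<Rightarrow> nat \<times> nat \<Rightarrow> bool" where
  "crossing e f \<longleftrightarrow>
     (fst e < fst f \<and> fst f < snd e \<and> snd e < snd f) \<or>
     (fst f < fst e \<and> fst e < snd f \<and> snd f < snd e)"

definition adj_in :: "(nat \<times> nat) set \<Rightarrow> nat set \<Rightarrow> (nat \<times> nat) set" where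
  "adj_in E S = {(u, v). u \<in> S \<and> v \<in> S \<and> adj E u v}"

definition connected_in :: "(nat \<times> nat) set \<Rightarrow> nat set \<Rightarrow> nat \<Rightarrow> nat \<Rightarrow> bool" where
  "connected_in E S u v \<longleftrightarrow> u \<in> S \<and> v \<in> S \<and> (u, v) \<in> (adj_in E S)\<^sup>*"

definition induced_connected :: "(nat \<times> nat) set \<Rightarrow> nat set \<Rightarrow> bool" where
  "induced_connected E S \<longleftrightarrow> S \<noteq> {} \<and> (\<forall>u\<in>S. \<forall>v\<in>S. connected_in E S u v)"

definition conn_containing :: "nat \<Rightarrow> (nat \<times> nat) set \<Rightarrow> nat \<times> nat \<Rightarrow> nat \<times> nat \<Rightarrow> nat set \<Rightarrow> bool" where
  "conn_containing n E e f S \<longleftrightarrow>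
     S \<subseteq> {1..n} \<and> ends e \<union> ends f \<subseteq> S \<and> induced_connected E S"

definition minimal_conn :: "nat \<Rightarrow> (nat \<times> nat) set \<Rightarrow> nat \<times> nat \<Rightarrow> nat \<times> nat \<Rightarrow> nat set \<Rightarrow> bool" where
  "minimal_conn n E e f S \<longleftrightarrow>
     conn_containing n E e f S \<and> (\<forall>T. conn_containing n E e f T \<and> T \<subseteq> S \<longrightarrow> T = S)"

definition crossing_closed :: "nat \<Rightarrow> (nat \<times> nat) set \<Rightarrow> nat \<times> nat \<Rightarrow> nat \<times> nat \<Rightarrow> bool" where
  "crossing_closed n E e f \<longleftrightarrow> crossing e f \<and> (\<exists>!S. minimal_conn n E e f S)"

text \<open>Vertex set of J(e,f); J(e,f) itself is the induced subgraph G[J_set n E e f].\<close>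
definition J_set :: "nat \<Rightarrow> (nat \<times> nat) set \<Rightarrow> nat \<times> nat \<Rightarrow> nat \<times> nat \<Rightarrow> nat set" where
  "J_set n E e f = (THE S. minimal_conn n E e f S)"

definition induced_edges :: "(nat \<times> nat) set \<Rightarrow> nat set \<Rightarrow> nat set set" where
  "induced_edges E S = {{a, b} | a b. (a, b) \<in> E \<and> a \<in> S \<and> b \<in> S}"

definition separates :: "nat \<Rightarrow> (nat \<times> nat) set \<Rightarrow> nat \<Rightarrow> nat \<times> nat \<Rightarrow> nat \<times> nat \<Rightarrow> bool" where
  "separates n E x e f \<longleftrightarrow>
     x \<notin> ends e \<and> x \<notin> ends f \<and>
     (\<forall>a\<in>ends e. \<forall>b\<in>ends f. \<not> connected_in E ({1..n} - {x}) a b)"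

definition cut_vertex :: "nat \<Rightarrow> (nat \<times> nat) set \<Rightarrow> nat \<Rightarrow> bool" where
  "cut_vertex n E x \<longleftrightarrow> x \<in> {1..n} \<and>
     (\<exists>u v. u \<noteq> x \<and> v \<noteq> x \<and> connected_in E {1..n} u v \<and>
            \<not> connected_in E ({1..n} - {x}) u v)"

end

theory Submission
  imports Defs
begin

text \<open>If an edge joins e and f, the four endpoints already induce a connected graph, and J(e,f)
  lies in every vertex set in which e and f are connected. Otherwise take a shortest path
  p 0, ..., p m from e to f and measure the distance d from e: d (p i) = i, and adjacent vertices
  differ in d by at most one. J(e,f) lies in e, f and the inner path vertices, where p i is the
  only vertex with d = i; a walk inside J(e,f) from e to f passes through every level between 0
  and m, so it contains every inner p i. The same levels determine the edges of J(e,f), and if e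
  and f were connected in G - p i, then J(e,f) would avoid p i.\<close>

text \<open>Meaningful only when v is reachable from D; otherwise the LEAST is unspecified.\<close>
definition dist_from :: "'a rel \<Rightarrow> 'a set \<Rightarrow> 'a \<Rightarrow> nat" where
  "dist_from R D v = (LEAST k. \<exists>a\<in>D. (a, v) \<in> R ^^ k)"

definition shortest_path :: "'a rel \<Rightarrow> 'a set \<Rightarrow> 'a set \<Rightarrow> (nat \<Rightarrow> 'a) \<Rightarrow> nat \<Rightarrow> bool" where
  "shortest_path R D D' p m \<longleftrightarrow>
     p 0 \<in> D \<and> p m \<in> D' \<and> (\<forall>i<m. (p i, p (Suc i)) \<in> R) \<and>
     (\<forall>a\<in>D. \<forall>b\<in>D'. \<forall>k. (a, b) \<in> R ^^ k \<longrightarrow> m \<le> k)"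

lemma dist_from_le: "a \<in> D \<Longrightarrow> (a, v) \<in> R ^^ k \<Longrightarrow> dist_from R D v \<le> k"
  unfolding dist_from_def by (blast intro: Least_le)

lemma dist_from_eq_0: "a \<in> D \<Longrightarrow> dist_from R D a = 0"
  using dist_from_le[where k = 0] by fastforce

lemma dist_from_attained:
  assumes "a \<in> D" "(a, v) \<in> R\<^sup>*"
  shows "\<exists>a'\<in>D. (a', v) \<in> R ^^ dist_from R D v"
proof -
  have "\<exists>k. \<exists>a\<in>D. (a, v) \<in> R ^^ k" using assms by (auto simp: rtrancl_power)
  then show ?thesis unfolding dist_from_def by (rule LeastI_ex)
qed

lemma dist_from_step:
  assumes "a \<in> D" "(a, u) \<in> R\<^sup>*" "(u, v) \<in> R"
  shows "dist_from R D v \<le> Suc (dist_from R D u)"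
proof -
  obtain a' where "a' \<in> D" "(a', u) \<in> R ^^ dist_from R D u"
    using dist_from_attained[OF assms(1,2)] by blast
  with assms(3) have "(a', v) \<in> R ^^ Suc (dist_from R D u)" by auto
  with \<open>a' \<in> D\<close> show ?thesis by (rule dist_from_le)
qed

lemma path_relpow:
  assumes "\<And>i. i < m \<Longrightarrow> (p i, p (Suc i)) \<in> R" "i \<le> j" "j \<le> m"
  shows "(p i, p j) \<in> R ^^ (j - i)"
  unfolding relpow_fun_conv
  by (rule exI[of _ "\<lambda>k. p (i + k)"]) (use assms in auto)

lemma shortest_path_exists:
  assumes "a \<in> D" "b \<in> D'" "(a, b) \<in> R\<^sup>*"
  obtains p m where "shortest_path R D D' p m"
proof -
  let ?P = "\<lambda>k. \<exists>a\<in>D. \<exists>b\<in>D'. (a, b) \<in> R ^^ k"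
  define m where "m = (LEAST k. ?P k)"
  have "\<exists>k. ?P k" using assms by (auto simp: rtrancl_power)
  then have "?P m" unfolding m_def by (rule LeastI_ex)
  then obtain p where "p 0 \<in> D" "p m \<in> D'" "\<forall>i<m. (p i, p (Suc i)) \<in> R"
    unfolding relpow_fun_conv by blast
  moreover have "\<forall>a\<in>D. \<forall>b\<in>D'. \<forall>k. (a, b) \<in> R ^^ k \<longrightarrow> m \<le> k"
    unfolding m_def by (blast intro: Least_le)
  ultimately show thesis using that unfolding shortest_path_def by blast
qed

lemma shortest_path_dist_from:
  assumes sp: "shortest_path R D D' p m" and "i \<le> m"
  shows "dist_from R D (p i) = i"
proof (rule antisym)
  have steps: "\<And>i. i < m \<Longrightarrow> (p i, p (Suc i)) \<in> R" and p0: "p 0 \<in> D"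
    using sp by (auto simp: shortest_path_def)
  from steps have prefix: "(p 0, p i) \<in> R ^^ (i - 0)"
    by (rule path_relpow) (use \<open>i \<le> m\<close> in auto)
  from steps have suffix: "(p i, p m) \<in> R ^^ (m - i)"
    by (rule path_relpow) (use \<open>i \<le> m\<close> in auto)
  show "dist_from R D (p i) \<le> i"
    using dist_from_le[OF p0 prefix] by simp
  obtain a where a: "a \<in> D" "(a, p i) \<in> R ^^ dist_from R D (p i)"
    using dist_from_attained[OF p0 relpow_imp_rtrancl[OF prefix]] by blast
  with suffix have "(a, p m) \<in> R ^^ (dist_from R D (p i) + (m - i))"
    by (auto simp: relpow_add)
  then have "m \<le> dist_from R D (p i) + (m - i)"
    using sp a(1) by (auto simp: shortest_path_def)
  then show "i \<le> dist_from R D (p i)" using \<open>i \<le> m\<close> by linarith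
qed

lemma shortest_path_le_dist_from:
  assumes "shortest_path R D D' p m" "a \<in> D" "(a, b) \<in> R\<^sup>*" "b \<in> D'"
  shows "m \<le> dist_from R D b"
  using dist_from_attained[OF assms(2,3)] assms(1,4) by (auto simp: shortest_path_def)

lemma rtrancl_intermediate_value:
  fixes g :: "'a \<Rightarrow> nat"
  assumes "(a, b) \<in> R\<^sup>*"
    and step: "\<And>u v. (a, u) \<in> R\<^sup>* \<Longrightarrow> (u, v) \<in> R \<Longrightarrow> g v \<le> Suc (g u)"
    and "g a \<le> t" "t \<le> g b"
  shows "\<exists>c. (a, c) \<in> R\<^sup>* \<and> g c = t"
  using assms(1,4)
proof (induction rule: rtrancl_induct)
  case base
  then show ?case using \<open>g a \<le> t\<close> by (intro exI[of _ a]) auto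
next
  case (step y z)
  show ?case
  proof (cases "t \<le> g y")
    case True
    then show ?thesis using step.IH by blast
  next
    case False
    then have "t = g z" using step.prems assms(2)[OF step.hyps] by linarith
    then show ?thesis using step.hyps by (blast intro: rtrancl_into_rtrancl)
  qed
qed

lemma adj_sym: "adj E u v \<longleftrightarrow> adj E v u"
  by (auto simp: adj_def)

lemma adj_irrefl: "graph_on n E \<Longrightarrow> \<not> adj E u u"
  by (auto simp: adj_def graph_on_def)

lemma ends_subset_vertices: "graph_on n E \<Longrightarrow> e \<in> E \<Longrightarrow> ends e \<subseteq> {1..n}"
  by (auto simp: graph_on_def ends_def)

lemma adj_ends: "e \<in> E \<Longrightarrow> a \<in> ends e \<Longrightarrow> b \<in> ends e \<Longrightarrow> a \<noteq> b \<Longrightarrow> adj E a b"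
  by (auto simp: ends_def adj_def)

lemma ends_eq_pair: "a \<in> ends g \<Longrightarrow> b \<in> ends g \<Longrightarrow> a \<noteq> b \<Longrightarrow> {a, b} = ends g"
  by (auto simp: ends_def)

lemma crossing_ends_disjoint: "crossing e f \<Longrightarrow> ends e \<inter> ends f = {}"
  by (auto simp: crossing_def ends_def)

lemma adj_in_iff: "(u, v) \<in> adj_in E S \<longleftrightarrow> u \<in> S \<and> v \<in> S \<and> adj E u v"
  by (simp add: adj_in_def)

lemma adj_in_mono: "S \<subseteq> T \<Longrightarrow> adj_in E S \<subseteq> adj_in E T"
  by (auto simp: adj_in_def)

lemma sym_adj_in: "sym (adj_in E S)"
  by (auto simp: sym_def adj_in_def adj_sym)

lemma rtrancl_adj_in_closed: "(a, c) \<in> (adj_in E S)\<^sup>* \<Longrightarrow> a \<in> S \<Longrightarrow> c \<in> S"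
  by (induction rule: rtrancl_induct) (auto simp: adj_in_def)

lemma induced_edges_adj:
  "induced_edges E S = {{a, b} | a b. adj E a b \<and> a \<in> S \<and> b \<in> S}"
  unfolding induced_edges_def adj_def by (auto simp: insert_commute)

lemma component_induced_connected:
  assumes "a \<in> S"
  shows "induced_connected E {c. connected_in E S a c}"
proof -
  let ?C = "{c. connected_in E S a c}"
  have in_C: "(a, c) \<in> (adj_in E ?C)\<^sup>*" if "(a, c) \<in> (adj_in E S)\<^sup>*" for c
    using that
  proof (induction rule: rtrancl_induct)
    case (step y z)
    have "(a, z) \<in> (adj_in E S)\<^sup>*" using step.hyps by (rule rtrancl_into_rtrancl)
    then have "y \<in> ?C" "z \<in> ?C"
      using step.hyps assms by (auto simp: connected_in_def intro: rtrancl_adj_in_closed)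
    then have "(y, z) \<in> adj_in E ?C" using step.hyps(2) by (simp add: adj_in_def)
    with step.IH show ?case by (rule rtrancl_into_rtrancl)
  qed simp
  have "(u, v) \<in> (adj_in E ?C)\<^sup>*" if "u \<in> ?C" "v \<in> ?C" for u v
    using in_C[of u] in_C[of v] that sym_rtrancl[OF sym_adj_in, of E ?C]
    by (auto simp: connected_in_def sym_def intro: rtrancl_trans)
  then show ?thesis
    using assms by (auto simp: induced_connected_def connected_in_def)
qed

lemma conn_containing_J_set:
  assumes "crossing_closed n E e f"
  shows "conn_containing n E e f (J_set n E e f)"
proof -
  have "minimal_conn n E e f (J_set n E e f)"
    using assms unfolding crossing_closed_def J_set_def by (rule theI'[OF conjunct2])
  then show ?thesis by (simp add: minimal_conn_def)
qed

lemma J_set_connected: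
  assumes "crossing_closed n E e f" "u \<in> J_set n E e f" "v \<in> J_set n E e f"
  shows "(u, v) \<in> (adj_in E (J_set n E e f))\<^sup>*"
  using conn_containing_J_set[OF assms(1)] assms(2,3)
  by (auto simp: conn_containing_def induced_connected_def connected_in_def)

lemma J_set_reachable:
  assumes "crossing_closed n E e f" "u \<in> J_set n E e f" "v \<in> J_set n E e f"
  shows "(u, v) \<in> (adj_in E {1..n})\<^sup>*"
proof -
  have "adj_in E (J_set n E e f) \<subseteq> adj_in E {1..n}"
    using conn_containing_J_set[OF assms(1)] by (intro adj_in_mono) (simp add: conn_containing_def)
  with J_set_connected[OF assms] show ?thesis by (blast intro: rtrancl_mono[THEN subsetD])
qed

lemma J_set_subset:
  assumes cc: "crossing_closed n E e f" and T: "conn_containing n E e f T"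
  shows "J_set n E e f \<subseteq> T"
proof -
  let ?P = "\<lambda>S. conn_containing n E e f S \<and> S \<subseteq> T"
  obtain M where M: "?P M" "\<And>S. ?P S \<Longrightarrow> card M \<le> card S"
    using ex_has_least_nat[of ?P T card] T by blast
  have "finite M"
    using M(1) finite_subset by (auto simp: conn_containing_def)
  with M have "minimal_conn n E e f M"
    unfolding minimal_conn_def by (metis card_seteq order.trans)
  then have "M = J_set n E e f"
    using cc unfolding crossing_closed_def J_set_def by (metis the_equality)
  with M show ?thesis by blast
qed

lemma J_set_subset_if_connected:
  assumes cc: "crossing_closed n E e f" and e: "e \<in> E" and f: "f \<in> E"
    and S: "ends e \<union> ends f \<subseteq> S" "S \<subseteq> {1..n}"
    and ab: "a \<in> ends e" "b \<in> ends f" "connected_in E S a b"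
  shows "J_set n E e f \<subseteq> S"
proof -
  let ?C = "{c. connected_in E S a c}"
  have edge_in_C: "ends g \<subseteq> ?C" if "g \<in> E" "ends g \<subseteq> S" "u \<in> ends g" "u \<in> ?C" for g u
  proof
    fix w assume "w \<in> ends g"
    then have "w = u \<or> (u, w) \<in> adj_in E S"
      using that adj_ends[OF \<open>g \<in> E\<close>, of u w] by (auto simp: adj_in_def)
    with \<open>u \<in> ?C\<close> \<open>w \<in> ends g\<close> show "w \<in> ?C"
      using \<open>ends g \<subseteq> S\<close> by (auto simp: connected_in_def)
  qed
  have "a \<in> ?C" using ab S by (auto simp: connected_in_def)
  then have "conn_containing n E e f ?C"
    using edge_in_C[OF e _ ab(1)] edge_in_C[OF f _ ab(2)] ab S component_induced_connected[of a S E]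
    by (auto simp: conn_containing_def connected_in_def)
  then have "J_set n E e f \<subseteq> ?C" by (rule J_set_subset[OF cc])
  then show ?thesis by (auto simp: connected_in_def)
qed

lemma J_set_if_adjacent:
  assumes cc: "crossing_closed n E e f" and G: "graph_on n E" and e: "e \<in> E" and f: "f \<in> E"
    and ab: "a \<in> ends e" "b \<in> ends f" "adj E a b"
  shows "J_set n E e f = ends e \<union> ends f"
proof
  have "connected_in E (ends e \<union> ends f) a b"
    using ab by (auto simp: connected_in_def adj_in_def)
  then show "J_set n E e f \<subseteq> ends e \<union> ends f"
    using J_set_subset_if_connected[OF cc e f _ _ ab(1,2)]
      ends_subset_vertices[OF G e] ends_subset_vertices[OF G f] by blast
  show "ends e \<union> ends f \<subseteq> J_set n E e f"
    using conn_containing_J_set[OF cc] by (simp add: conn_containing_def)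
qed

locale shortest_connecting_path =
  fixes n :: nat and E :: "(nat \<times> nat) set" and e f :: "nat \<times> nat"
    and p :: "nat \<Rightarrow> nat" and m :: nat
  assumes graph: "graph_on n E" and e: "e \<in> E" and f: "f \<in> E"
    and cc: "crossing_closed n E e f"
    and no_adj: "\<not> (\<exists>a\<in>ends e. \<exists>b\<in>ends f. adj E a b)"
    and sp: "shortest_path (adj_in E {1..n}) (ends e) (ends f) p m"
begin

abbreviation J where "J \<equiv> J_set n E e f"

abbreviation dist_e where "dist_e \<equiv> dist_from (adj_in E {1..n}) (ends e)"

lemma path_adj: "i < m \<Longrightarrow> (p i, p (Suc i)) \<in> adj_in E {1..n}"
  using sp by (simp add: shortest_path_def)

lemma path_ends: "p 0 \<in> ends e" "p m \<in> ends f"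
  using sp by (simp_all add: shortest_path_def)

lemma ends_disjoint: "ends e \<inter> ends f = {}"
  using cc crossing_ends_disjoint by (simp add: crossing_closed_def)

lemma two_le_length: "2 \<le> m"
proof -
  have "m \<noteq> 0"
    using path_ends ends_disjoint by auto
  moreover have "m \<noteq> 1"
    using path_ends path_adj[of 0] no_adj by (auto simp: adj_in_def)
  ultimately show ?thesis by linarith
qed

lemma dist_e_path: "i \<le> m \<Longrightarrow> dist_e (p i) = i"
  by (rule shortest_path_dist_from[OF sp])

lemma ends_subset_J: "ends e \<union> ends f \<subseteq> J"
  using conn_containing_J_set[OF cc] by (simp add: conn_containing_def)

lemma J_subset_vertices: "J \<subseteq> {1..n}"
  using conn_containing_J_set[OF cc] by (simp add: conn_containing_def)

lemma reachable_in_J: "u \<in> J \<Longrightarrow> (p 0, u) \<in> (adj_in E J)\<^sup>*"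
  using J_set_connected[OF cc] ends_subset_J path_ends by blast

lemma reachable_of_J: "u \<in> J \<Longrightarrow> (p 0, u) \<in> (adj_in E {1..n})\<^sup>*"
  using J_set_reachable[OF cc] ends_subset_J path_ends by blast

lemma dist_e_ends_f: "b \<in> ends f \<Longrightarrow> m \<le> dist_e b"
  using shortest_path_le_dist_from[OF sp path_ends(1) reachable_of_J] ends_subset_J by blast

lemma dist_e_adj:
  assumes "u \<in> J" "v \<in> J" "adj E u v"
  shows "dist_e v \<le> Suc (dist_e u)"
proof -
  have "(u, v) \<in> adj_in E {1..n}" using assms J_subset_vertices by (auto simp: adj_in_iff)
  then show ?thesis by (rule dist_from_step[OF path_ends(1) reachable_of_J[OF assms(1)]])
qed

lemma J_subset_path: "J \<subseteq> ends e \<union> ends f \<union> p ` {1..<m}"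
proof (rule J_set_subset_if_connected[OF cc e f _ _ path_ends])
  let ?S = "ends e \<union> ends f \<union> p ` {1..<m}"
  have in_S: "p i \<in> ?S" if "i \<le> m" for i
  proof (cases "i = 0 \<or> i = m")
    case True
    then show ?thesis using path_ends by blast
  next
    case False
    with that show ?thesis by simp
  qed
  have "(p i, p (Suc i)) \<in> adj_in E ?S" if "i < m" for i
    using path_adj[OF that] in_S[of i] in_S[of "Suc i"] that by (simp add: adj_in_iff)
  then have "(p 0, p m) \<in> adj_in E ?S ^^ (m - 0)"
    by (rule path_relpow) auto
  then show "connected_in E ?S (p 0) (p m)"
    using in_S[of 0] in_S[of m] by (simp add: connected_in_def relpow_imp_rtrancl)
  have "p ` {1..<m} \<subseteq> {1..n}"
    using path_adj by (auto simp: adj_in_iff)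
  then show "?S \<subseteq> {1..n}"
    using ends_subset_vertices[OF graph e] ends_subset_vertices[OF graph f] by blast
qed blast

lemma not_ends_if_level: "0 < dist_e u \<Longrightarrow> dist_e u < m \<Longrightarrow> u \<notin> ends e \<union> ends f"
  using dist_from_eq_0[where D = "ends e" and R = "adj_in E {1..n}"] dist_e_ends_f
  by (metis Un_iff less_le_not_le not_less_zero)

lemma interior_not_ends: "0 < i \<Longrightarrow> i < m \<Longrightarrow> p i \<notin> ends e \<union> ends f"
  using not_ends_if_level[of "p i"] dist_e_path[of i] by simp

lemma J_vertex_on_path:
  assumes "u \<in> J" "u \<notin> ends e \<union> ends f"
  shows "0 < dist_e u \<and> dist_e u < m \<and> u = p (dist_e u)"
proof -
  have "u \<in> p ` {1..<m}" using assms J_subset_path by blast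
  then obtain i where "i \<in> {1..<m}" "u = p i" by (rule imageE)
  then show ?thesis using dist_e_path[of i] by auto
qed

lemma interior_in_J:
  assumes "0 < i" "i < m"
  shows "p i \<in> J"
proof -
  have "\<exists>c. (p 0, c) \<in> (adj_in E J)\<^sup>* \<and> dist_e c = i"
  proof (rule rtrancl_intermediate_value)
    show "(p 0, p m) \<in> (adj_in E J)\<^sup>*"
      using reachable_in_J ends_subset_J path_ends by blast
    show "dist_e v \<le> Suc (dist_e u)" if "(u, v) \<in> adj_in E J" for u v
      using that dist_e_adj by (simp add: adj_in_iff)
    show "dist_e (p 0) \<le> i" using dist_e_path[of 0] by simp
    show "i \<le> dist_e (p m)" using dist_e_path[of m] assms by simp
  qed
  then obtain c where c: "(p 0, c) \<in> (adj_in E J)\<^sup>*" "dist_e c = i" by blast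
  have "c \<in> J"
    using rtrancl_adj_in_closed[OF c(1)] ends_subset_J path_ends(1) by blast
  moreover have "c \<notin> ends e \<union> ends f"
    using not_ends_if_level[of c] assms unfolding c(2) by blast
  ultimately show ?thesis using J_vertex_on_path c(2) by metis
qed

lemma J_eq: "J = ends e \<union> ends f \<union> p ` {1..<m}"
proof
  have "p ` {1..<m} \<subseteq> J" using interior_in_J by (simp add: image_subset_iff)
  then show "ends e \<union> ends f \<union> p ` {1..<m} \<subseteq> J" using ends_subset_J by blast
qed (rule J_subset_path)

lemma separates_interior:
  assumes "0 < i" "i < m"
  shows "separates n E (p i) e f"
proof -
  have "\<not> connected_in E ({1..n} - {p i}) a b" if "a \<in> ends e" "b \<in> ends f" for a b
  proof
    assume "connected_in E ({1..n} - {p i}) a b"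
    moreover have "ends e \<union> ends f \<subseteq> {1..n} - {p i}"
      using interior_not_ends[OF assms] ends_subset_vertices[OF graph e]
        ends_subset_vertices[OF graph f] by blast
    ultimately have "J \<subseteq> {1..n} - {p i}"
      using J_set_subset_if_connected[OF cc e f _ _ that] by blast
    with interior_in_J[OF assms] show False by blast
  qed
  then show ?thesis using interior_not_ends[OF assms] by (auto simp: separates_def)
qed

lemma cut_vertex_interior:
  assumes "0 < i" "i < m"
  shows "cut_vertex n E (p i)"
  unfolding cut_vertex_def
proof (intro conjI exI)
  show "p i \<in> {1..n}" using interior_in_J[OF assms] J_subset_vertices by blast
  show "p 0 \<noteq> p i" "p m \<noteq> p i" using interior_not_ends[OF assms] path_ends by auto
  show "connected_in E {1..n} (p 0) (p m)"
    using reachable_of_J ends_subset_J path_ends J_subset_vertices by (auto simp: connected_in_def)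
  show "\<not> connected_in E ({1..n} - {p i}) (p 0) (p m)"
    using separates_interior[OF assms] path_ends by (auto simp: separates_def)
qed

lemma J_edge_cases:
  assumes uv: "u \<in> J" "v \<in> J" "adj E u v" and le: "dist_e u \<le> dist_e v"
  shows "{u, v} = ends e \<or> {u, v} = ends f \<or> (\<exists>i. 0 < i \<and> Suc i < m \<and> {u, v} = {p i, p (Suc i)}) \<or>
    (u \<in> ends e \<and> v = p 1) \<or> (v \<in> ends f \<and> u = p (m - 1))"
proof -
  have "u \<noteq> v" using uv(3) adj_irrefl[OF graph] by blast
  have step: "dist_e v \<le> Suc (dist_e u)" using dist_e_adj[OF uv] .
  have e0: "dist_e a = 0" if "a \<in> ends e" for a using that by (rule dist_from_eq_0)
  consider "u \<in> ends e" | "u \<in> ends f" | "u \<notin> ends e \<union> ends f" by blast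
  then show ?thesis
  proof cases
    case 1
    consider "v \<in> ends e" | "v \<notin> ends e \<union> ends f"
      using 1 uv(3) no_adj by blast
    then show ?thesis
    proof cases
      case 2
      then have "dist_e v = 1" "v = p (dist_e v)"
        using J_vertex_on_path[OF uv(2)] step e0[OF 1] by auto
      with 1 show ?thesis by simp
    qed (use 1 ends_eq_pair \<open>u \<noteq> v\<close> in blast)
  next
    case 2
    then have "v \<in> ends f"
      using J_vertex_on_path[OF uv(2)] dist_e_ends_f[OF 2] le e0 two_le_length by fastforce
    with 2 show ?thesis using ends_eq_pair \<open>u \<noteq> v\<close> by blast
  next
    case 3
    note u_level = J_vertex_on_path[OF uv(1) 3]
    consider "v \<in> ends f" | "v \<notin> ends e \<union> ends f"
      using e0 le u_level by fastforce
    then show ?thesis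
    proof cases
      case 1
      then have "dist_e u = m - 1" using dist_e_ends_f[OF 1] step u_level by linarith
      with 1 u_level show ?thesis by simp
    next
      case 2
      note v_level = J_vertex_on_path[OF uv(2) 2]
      have "dist_e v = Suc (dist_e u)"
        using le step u_level v_level \<open>u \<noteq> v\<close> by (metis le_SucE le_antisym)
      then show ?thesis using u_level v_level by metis
    qed
  qed
qed

lemma induced_edges_J:
  "induced_edges E J = {ends e, ends f} \<union> {{p i, p (Suc i)} | i. 0 < i \<and> Suc i < m}
     \<union> {{a, p 1} | a. a \<in> ends e \<and> adj E a (p 1)}
     \<union> {{b, p (m - 1)} | b. b \<in> ends f \<and> adj E b (p (m - 1))}" (is "_ = ?R")
proof
  have sorted: "{u, v} \<in> ?R" if "u \<in> J" "v \<in> J" "adj E u v" "dist_e u \<le> dist_e v" for u v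
    using J_edge_cases[OF that]
  proof (elim disjE)
    assume "\<exists>i. 0 < i \<and> Suc i < m \<and> {u, v} = {p i, p (Suc i)}"
    then show ?thesis by blast
  next
    assume "u \<in> ends e \<and> v = p 1"
    with that(3) show ?thesis by blast
  next
    assume *: "v \<in> ends f \<and> u = p (m - 1)"
    then have "{u, v} = {v, p (m - 1)}" by (simp add: insert_commute)
    moreover have "adj E v (p (m - 1))" using * that(3) by (simp add: adj_sym)
    ultimately show ?thesis using * by blast
  qed simp_all
  have "{u, v} \<in> ?R" if "u \<in> J" "v \<in> J" "adj E u v" for u v
  proof (cases "dist_e u \<le> dist_e v")
    case True
    with that show ?thesis by (rule sorted)
  next
    case False
    then have "{v, u} \<in> ?R" using that adj_sym by (intro sorted) auto
    then show ?thesis by (simp add: insert_commute)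
  qed
  then show "induced_edges E J \<subseteq> ?R"
    unfolding induced_edges_adj by blast
  have edge: "{a, b} \<in> induced_edges E J" if "adj E a b" "a \<in> J" "b \<in> J" for a b
    unfolding induced_edges_adj using that by blast
  have ends_edge: "ends g \<in> induced_edges E J" if "g \<in> E" "ends g \<subseteq> J" for g
    using that unfolding ends_def induced_edges_def by (cases g) auto
  have "p 1 \<in> J" "p (m - 1) \<in> J" using interior_in_J two_le_length by auto
  have "{ends e, ends f} \<subseteq> induced_edges E J"
    using ends_edge e f ends_subset_J by blast
  moreover have "{{p i, p (Suc i)} | i. 0 < i \<and> Suc i < m} \<subseteq> induced_edges E J"
    using edge path_adj interior_in_J by (force simp: adj_in_iff)
  moreover have "{{a, p 1} | a. a \<in> ends e \<and> adj E a (p 1)} \<subseteq> induced_edges E J"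
    using edge ends_subset_J \<open>p 1 \<in> J\<close> by blast
  moreover have "{{b, p (m - 1)} | b. b \<in> ends f \<and> adj E b (p (m - 1))} \<subseteq> induced_edges E J"
    using edge ends_subset_J \<open>p (m - 1) \<in> J\<close> by blast
  ultimately show "?R \<subseteq> induced_edges E J" by (simp only: Un_subset_iff)
qed

lemma J_set_path_shape:
  "\<exists>v v' w w' (k::nat) xs A B.
     ends e = {v, v'} \<and> ends f = {w, w'} \<and>
     length xs = k + 1 \<and> distinct xs \<and>
     set xs \<inter> (ends e \<union> ends f) = {} \<and>
     J_set n E e f = {v, v'} \<union> set xs \<union> {w', w} \<and>
     A \<noteq> {} \<and> A \<subseteq> {{v, xs ! 0}, {v', xs ! 0}} \<and>
     B \<noteq> {} \<and> B \<subseteq> {{w, xs ! k}, {w', xs ! k}} \<and>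
     induced_edges E (J_set n E e f) =
       {{v, v'}, {w, w'}} \<union> {{xs ! i, xs ! (i + 1)} | i. i < k} \<union> A \<union> B \<and>
     (\<forall>i\<le>k. cut_vertex n E (xs ! i) \<and> separates n E (xs ! i) e f)"
proof -
  define k where "k = m - 2"
  define xs where "xs = map p [1..<m]"
  define A where "A = {{a, p 1} | a. a \<in> ends e \<and> adj E a (p 1)}"
  define B where "B = {{b, p (m - 1)} | b. b \<in> ends f \<and> adj E b (p (m - 1))}"
  have m: "m = k + 2" using two_le_length by (simp add: k_def)
  have xs_nth: "xs ! i = p (Suc i)" if "i \<le> k" for i
    using that m by (simp add: xs_def del: upt_Suc)
  have length_xs: "length xs = k + 1" using m by (simp add: xs_def)
  have set_xs: "set xs = p ` {1..<m}" by (simp add: xs_def)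
  have "inj_on p {1..<m}"
    using dist_e_path by (metis atLeastLessThan_iff inj_onI less_imp_le)
  then have "distinct xs" by (simp add: xs_def distinct_map)
  moreover have "set xs \<inter> (ends e \<union> ends f) = {}"
    using interior_not_ends by (auto simp: set_xs)
  moreover have "J = {fst e, snd e} \<union> set xs \<union> {snd f, fst f}"
    using J_eq by (auto simp: set_xs ends_def)
  moreover have "A \<noteq> {}"
  proof -
    have "adj E (p 0) (p 1)" using path_adj[of 0] m by (simp add: adj_in_iff)
    then show ?thesis using path_ends(1) by (auto simp: A_def)
  qed
  moreover have "A \<subseteq> {{fst e, xs ! 0}, {snd e, xs ! 0}}"
    using xs_nth[of 0] by (auto simp: A_def ends_def)
  moreover have "B \<noteq> {}"
  proof -
    have "adj E (p (m - 1)) (p m)" using path_adj[of "m - 1"] m by (simp add: adj_in_iff)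
    then show ?thesis using path_ends(2) adj_sym by (auto simp: B_def)
  qed
  moreover have "B \<subseteq> {{fst f, xs ! k}, {snd f, xs ! k}}"
    using xs_nth[of k] m by (auto simp: B_def ends_def)
  moreover have "{{xs ! i, xs ! (i + 1)} | i. i < k} = {{p i, p (Suc i)} | i. 0 < i \<and> Suc i < m}"
  proof (intro equalityI subsetI)
    fix s assume "s \<in> {{xs ! i, xs ! (i + 1)} | i. i < k}"
    then obtain i where i: "i < k" "s = {xs ! i, xs ! (i + 1)}" by blast
    then have "s = {p (Suc i), p (Suc (Suc i))}" using xs_nth[of i] xs_nth[of "i + 1"] by simp
    moreover have "Suc (Suc i) < m" using i(1) m by simp
    ultimately show "s \<in> {{p i, p (Suc i)} | i. 0 < i \<and> Suc i < m}" by blast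
  next
    fix s assume "s \<in> {{p i, p (Suc i)} | i. 0 < i \<and> Suc i < m}"
    then obtain i where i: "0 < i" "Suc i < m" "s = {p i, p (Suc i)}" by blast
    then have "i - 1 < k" "s = {xs ! (i - 1), xs ! (i - 1 + 1)}"
      using xs_nth[of "i - 1"] xs_nth[of i] m by auto
    then show "s \<in> {{xs ! i, xs ! (i + 1)} | i. i < k}" by blast
  qed
  then have "induced_edges E J =
      {{fst e, snd e}, {fst f, snd f}} \<union> {{xs ! i, xs ! (i + 1)} | i. i < k} \<union> A \<union> B"
    using induced_edges_J by (simp add: A_def B_def ends_def)
  moreover have "\<forall>i\<le>k. cut_vertex n E (xs ! i) \<and> separates n E (xs ! i) e f"
    using cut_vertex_interior separates_interior xs_nth m by simp
  ultimately show ?thesis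
    using length_xs ends_def[of e] ends_def[of f] by - (intro exI conjI; assumption)
qed

end

theorem lemma2p4:
  fixes n :: nat and E :: "(nat \<times> nat) set" and e f :: "nat \<times> nat"
  assumes G: "graph_on n E"
    and e: "e \<in> E" and f: "f \<in> E"
    and cr: "crossing e f"
    and cc: "crossing_closed n E e f"
  shows "((\<exists>a\<in>ends e. \<exists>b\<in>ends f. adj E a b) \<longrightarrow>
            J_set n E e f = ends e \<union> ends f)
       \<and> ((\<not> (\<exists>a\<in>ends e. \<exists>b\<in>ends f. adj E a b)) \<longrightarrow>
            (\<exists>v v' w w' (k::nat) xs A B.
               ends e = {v, v'} \<and> ends f = {w, w'} \<and>
               length xs = k + 1 \<and> distinct xs \<and>
               set xs \<inter> (ends e \<union> ends f) = {} \<and>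
               J_set n E e f = {v, v'} \<union> set xs \<union> {w', w} \<and>
               A \<noteq> {} \<and> A \<subseteq> {{v, xs ! 0}, {v', xs ! 0}} \<and>
               B \<noteq> {} \<and> B \<subseteq> {{w, xs ! k}, {w', xs ! k}} \<and>
               induced_edges E (J_set n E e f) =
                 {{v, v'}, {w, w'}} \<union> {{xs ! i, xs ! (i + 1)} | i. i < k} \<union> A \<union> B \<and>
               (\<forall>i\<le>k. cut_vertex n E (xs ! i) \<and> separates n E (xs ! i) e f)))"
proof (cases "\<exists>a\<in>ends e. \<exists>b\<in>ends f. adj E a b")
  case True
  then show ?thesis using J_set_if_adjacent[OF cc G e f] by blast
next
  case False
  have ends: "fst e \<in> ends e" "fst f \<in> ends f" by (simp_all add: ends_def)
  moreover have "ends e \<union> ends f \<subseteq> J_set n E e f"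
    using conn_containing_J_set[OF cc] by (simp add: conn_containing_def)
  ultimately have "(fst e, fst f) \<in> (adj_in E {1..n})\<^sup>*"
    by (intro J_set_reachable[OF cc]) auto
  with ends obtain p m where "shortest_path (adj_in E {1..n}) (ends e) (ends f) p m"
    by (metis shortest_path_exists)
  then have "shortest_connecting_path n E e f p m"
    using G e f cc False by (simp add: shortest_connecting_path_def)
  then show ?thesis using shortest_connecting_path.J_set_path_shape False by simp
qed

end
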